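(* Let $S=s_1,\ldots,s_n$ be a sequence of positive real numbers, $\gamma>0$, $k$ a positive integer. Let $(L,\alpha,\beta)$ be an optimal solution of $\textsc{Exp}$ for $S,\gamma,k$. Let $g=(\prod_{i=1}^ns_i)^{1/n}$ and $\psi=n\log g$. Let $\epsilon_1,\epsilon_2>0$ and let $\alpha',\beta'$ satisfy $\beta\le\beta'\le\beta(1+\epsilon_1)$ and $\alpha\le\alpha'\le\alpha(1+\epsilon_2)$. Then \[ \mathrm{score}_{\exp}(L,S;\alpha',\beta',\gamma)-\psi\le c\,\big(\mathrm{score}_{\exp}(L,S;\alpha,\beta,\gamma)-\psi\big),\qquad c=(1+\epsilon_1)(1+\epsilon_2)^k. \]
   Context: A level sequence is $L=\ell_1,\ldots,\ell_n$ of integers with $0\le\ell_i\le k$; set $\ell_0=0$. The penalty is $\mathrm{pen}(x,y)=\max(y-x,0)\,\gamma\log n$; $p_{\exp}(s;\lambda)=\lambda e^{-\lambda s}$; $\mathrm{score}_{\exp}(L,S;\alpha,\beta,\gamma)=\sum_{i=1}^n\big[-\log p_{\exp}(s_i;\beta\alpha^{\ell_i})+\mathrm{pen}(\ell_{i-1},\ell_i)\big]$. Problem $\textsc{Exp}$: given $S,\gamma,k$, find $L$ and parameters $\alpha>1$, $\beta>0$ minimizing this score. The paper assumes $s_i>0$ for this problem. *)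

theory Defs
  imports Complex_Main
begin

text \<open>Sequences S = s_1..s_n and level sequences L = l_1..l_n are modelled as functions
  on nat, only their values at indices 1..n matter. The convention l_0 = 0 is built in.\<close>

definition lev :: "(nat \<Rightarrow> nat) \<Rightarrow> nat \<Rightarrow> nat" where
  "lev L i = (if i = 0 then 0 else L i)"

definition level_seq :: "nat \<Rightarrow> nat \<Rightarrow> (nat \<Rightarrow> nat) \<Rightarrow> bool" where
  "level_seq n k L \<longleftrightarrow> (\<forall>i\<in>{1..n}. L i \<le> k)"

definition pen :: "nat \<Rightarrow> real \<Rightarrow> nat \<Rightarrow> nat \<Rightarrow> real" where
  "pen n \<gamma> x y = max (real y - real x) 0 * \<gamma> * ln (real n)"

definition p_exp :: "real \<Rightarrow> real \<Rightarrow> real" where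
  "p_exp s lam = lam * exp (- lam * s)"

definition score_exp ::
  "nat \<Rightarrow> (nat \<Rightarrow> nat) \<Rightarrow> (nat \<Rightarrow> real) \<Rightarrow> real \<Rightarrow> real \<Rightarrow> real \<Rightarrow> real" where
  "score_exp n L S \<alpha> \<beta> \<gamma> =
     (\<Sum>i=1..n. - ln (p_exp (S i) (\<beta> * \<alpha> ^ lev L i)) + pen n \<gamma> (lev L (i - 1)) (lev L i))"

definition exp_optimal ::
  "nat \<Rightarrow> (nat \<Rightarrow> real) \<Rightarrow> real \<Rightarrow> nat \<Rightarrow> (nat \<Rightarrow> nat) \<Rightarrow> real \<Rightarrow> real \<Rightarrow> bool" where
  "exp_optimal n S \<gamma> k L \<alpha> \<beta> \<longleftrightarrow>
     level_seq n k L \<and> \<alpha> > 1 \<and> \<beta> > 0 \<and>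
     (\<forall>L' \<alpha>' \<beta>'. level_seq n k L' \<and> \<alpha>' > 1 \<and> \<beta>' > 0 \<longrightarrow>
        score_exp n L S \<alpha> \<beta> \<gamma> \<le> score_exp n L' S \<alpha>' \<beta>' \<gamma>)"

end

theory Submission
  imports Defs
begin

(* Write x_i = beta * alpha^l_i * s_i. Then score_exp - psi = sum (x_i - ln x_i) + P, where P >= 0
   is the total penalty. Optimality in beta alone, i.e. against rescaling all x_i by a common
   factor, forces sum x_i <= n and hence sum ln x_i <= 0. Passing to alpha', beta' multiplies each
   x_i by a factor between 1 and c; this multiplies sum x_i by at most c and can only increase
   sum ln x_i. As -sum ln x_i and P are nonnegative, the whole expression grows by at most the
   factor c. *)

lemma neg_ln_p_exp:
  fixes s r :: real
  assumes "s > 0" "r > 0"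
  shows "- ln (p_exp s r) = r * s - ln (r * s) + ln s"
  using assms by (simp add: p_exp_def ln_mult)

lemma pen_nonneg: "\<gamma> \<ge> 0 \<Longrightarrow> pen n \<gamma> x y \<ge> 0"
  unfolding pen_def by (cases "n = 0") (auto intro!: mult_nonneg_nonneg)

lemma score_exp_eq:
  assumes S: "\<forall>i\<in>{1..n}. S i > 0" and "\<alpha> > 0" "\<beta> > 0"
  shows "score_exp n L S \<alpha> \<beta> \<gamma> =
    (\<Sum>i=1..n. \<beta> * \<alpha> ^ lev L i * S i - ln (\<beta> * \<alpha> ^ lev L i * S i))
    + (\<Sum>i=1..n. ln (S i)) + (\<Sum>i=1..n. pen n \<gamma> (lev L (i - 1)) (lev L i))"
proof -
  have "score_exp n L S \<alpha> \<beta> \<gamma> =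
      (\<Sum>i=1..n. (\<beta> * \<alpha> ^ lev L i * S i - ln (\<beta> * \<alpha> ^ lev L i * S i)) + ln (S i)
        + pen n \<gamma> (lev L (i - 1)) (lev L i))"
    unfolding score_exp_def using assms by (intro sum.cong) (simp_all add: neg_ln_p_exp)
  then show ?thesis by (simp add: sum.distrib)
qed

lemma n_ln_geometric_mean:
  assumes "\<forall>i\<in>{1..n}. S i > 0"
  shows "real n * ln ((\<Prod>i=1..n. S i) powr (1 / real n)) = (\<Sum>i=1..n. ln (S i))"
proof (cases "n = 0")
  case False
  have "ln (\<Prod>i=1..n. S i) = (\<Sum>i=1..n. ln (S i))"
    using assms by (intro ln_prod) fastforce+
  with False assms show ?thesis by (simp add: prod_pos)
qed simp

lemma le_of_scaling_optimal:
  fixes A m :: real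
  assumes opt: "\<And>t. t > 0 \<Longrightarrow> A \<le> t * A - m * ln t" and "m \<ge> 0"
  shows "A \<le> m"
proof (rule ccontr)
  assume "\<not> A \<le> m"
  then have "A > m" "A > 0" using \<open>m \<ge> 0\<close> by auto
  \<comment> \<open>Any \<open>t < 1\<close> turns the hypothesis into \<open>t A \<le> m\<close>; take \<open>t A\<close> halfway between \<open>m\<close> and \<open>A\<close>.\<close>
  define t where "t = (A + m) / (2 * A)"
  have t: "0 < t" "t < 1" "t * A = (A + m) / 2"
    using \<open>A > m\<close> \<open>A > 0\<close> \<open>m \<ge> 0\<close> by (auto simp: t_def field_simps)
  have "- ln t \<le> (1 - t) / t"
    using ln_diff_le[of 1 t] t by simp
  then have "A \<le> t * A + m * ((1 - t) / t)"
    using opt[OF t(1)] \<open>m \<ge> 0\<close> mult_left_mono[of "- ln t" "(1 - t) / t" m] by simp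
  then have "(1 - t) * (t * A) \<le> (1 - t) * m"
    using t(1) by (simp add: field_simps)
  then have "t * A \<le> m" using t(2) by simp
  with t(3) \<open>A > m\<close> show False by simp
qed

lemma exp_optimal_sum_le:
  assumes S: "\<forall>i\<in>{1..n}. S i > 0" and opt: "exp_optimal n S \<gamma> k L \<alpha> \<beta>"
  shows "(\<Sum>i=1..n. \<beta> * \<alpha> ^ lev L i * S i) \<le> real n"
proof -
  define x where "x i = \<beta> * \<alpha> ^ lev L i * S i" for i
  define R where "R = (\<Sum>i=1..n. ln (S i)) + (\<Sum>i=1..n. pen n \<gamma> (lev L (i - 1)) (lev L i))"
  have \<alpha>\<beta>: "\<alpha> > 1" "\<beta> > 0" and L: "level_seq n k L"
    using opt by (auto simp: exp_optimal_def)
  have x: "x i > 0" if "i \<in> {1..n}" for i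
    using \<alpha>\<beta> S that by (simp add: x_def)
  have score: "score_exp n L S \<alpha> (t * \<beta>) \<gamma>
      = t * sum x {1..n} - real n * ln t - (\<Sum>i=1..n. ln (x i)) + R" if "t > 0" for t
  proof -
    have "ln (t * x i) = ln t + ln (x i)" if "i \<in> {1..n}" for i
      using x[OF that] \<open>t > 0\<close> by (simp add: ln_mult)
    then have "(\<Sum>i=1..n. t * x i - ln (t * x i)) = (\<Sum>i=1..n. t * x i - ln t - ln (x i))"
      by (intro sum.cong refl) simp
    moreover have "score_exp n L S \<alpha> (t * \<beta>) \<gamma> = (\<Sum>i=1..n. t * x i - ln (t * x i)) + R"
      using score_exp_eq[OF S, of \<alpha> "t * \<beta>" L \<gamma>] \<alpha>\<beta> \<open>t > 0\<close>
      by (simp add: x_def R_def mult.assoc)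
    ultimately show ?thesis
      by (simp add: sum_subtractf sum_distrib_left)
  qed
  have "sum x {1..n} \<le> t * sum x {1..n} - real n * ln t" if "t > 0" for t
  proof -
    have "score_exp n L S \<alpha> (1 * \<beta>) \<gamma> \<le> score_exp n L S \<alpha> (t * \<beta>) \<gamma>"
      using opt L \<alpha>\<beta> \<open>t > 0\<close> by (simp add: exp_optimal_def)
    then show ?thesis
      unfolding score[OF \<open>t > 0\<close>] score[OF zero_less_one] by simp
  qed
  then have "sum x {1..n} \<le> real n"
    using of_nat_0_le_iff by (rule le_of_scaling_optimal)
  then show ?thesis
    by (simp add: x_def)
qed

lemma sum_ln_le_zero:
  fixes x :: "'a \<Rightarrow> real"
  assumes "\<And>i. i \<in> I \<Longrightarrow> x i > 0" and "sum x I \<le> card I"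
  shows "(\<Sum>i\<in>I. ln (x i)) \<le> 0"
proof -
  have "(\<Sum>i\<in>I. ln (x i)) \<le> (\<Sum>i\<in>I. x i - 1)"
    using assms(1) ln_le_minus_one by (intro sum_mono) auto
  with assms(2) show ?thesis by (simp add: sum_subtractf)
qed

lemma sum_sub_ln_scaled_le:
  fixes x x' :: "'a \<Rightarrow> real"
  assumes x: "\<And>i. i \<in> I \<Longrightarrow> 0 < x i \<and> x i \<le> x' i \<and> x' i \<le> c * x i"
    and "c \<ge> 1" and "P \<ge> 0" and "(\<Sum>i\<in>I. ln (x i)) \<le> 0"
  shows "(\<Sum>i\<in>I. x' i - ln (x' i)) + P \<le> c * ((\<Sum>i\<in>I. x i - ln (x i)) + P)"
proof -
  have "x' i - ln (x' i) \<le> c * x i - ln (x i)" if "i \<in> I" for i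
  proof -
    have "0 < x i" "x i \<le> x' i" "x' i \<le> c * x i" using x[OF that] by auto
    moreover from this have "ln (x i) \<le> ln (x' i)" by (subst ln_le_cancel_iff) auto
    ultimately show ?thesis by linarith
  qed
  then have "(\<Sum>i\<in>I. x' i - ln (x' i)) \<le> (\<Sum>i\<in>I. c * x i - ln (x i))"
    by (rule sum_mono)
  also have "\<dots> = c * sum x I - (\<Sum>i\<in>I. ln (x i))"
    by (simp add: sum_subtractf sum_distrib_left)
  finally show ?thesis
    using assms(2-4) mult_right_mono_neg[of 1 c "\<Sum>i\<in>I. ln (x i)"] mult_right_mono[of 1 c P]
    by (simp add: sum_subtractf algebra_simps)
qed

lemma rate_perturbation_bounds:
  fixes \<alpha> \<beta> \<alpha>' \<beta>' \<epsilon>\<^sub>1 \<epsilon>\<^sub>2 :: real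
  assumes "\<alpha> > 0" "\<beta> > 0" "\<epsilon>\<^sub>2 \<ge> 0" "l \<le> k"
    and "\<beta> \<le> \<beta>'" "\<beta>' \<le> \<beta> * (1 + \<epsilon>\<^sub>1)" "\<alpha> \<le> \<alpha>'" "\<alpha>' \<le> \<alpha> * (1 + \<epsilon>\<^sub>2)"
  shows "\<beta> * \<alpha> ^ l \<le> \<beta>' * \<alpha>' ^ l"
    and "\<beta>' * \<alpha>' ^ l \<le> (1 + \<epsilon>\<^sub>1) * (1 + \<epsilon>\<^sub>2) ^ k * (\<beta> * \<alpha> ^ l)"
proof -
  show "\<beta> * \<alpha> ^ l \<le> \<beta>' * \<alpha>' ^ l"
    using assms by (intro mult_mono power_mono) auto
  have "\<alpha>' ^ l \<le> (\<alpha> * (1 + \<epsilon>\<^sub>2)) ^ l"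
    using assms by (intro power_mono) auto
  also have "\<dots> \<le> \<alpha> ^ l * (1 + \<epsilon>\<^sub>2) ^ k"
    unfolding power_mult_distrib using assms by (intro mult_left_mono power_increasing) auto
  finally have "\<beta>' * \<alpha>' ^ l \<le> \<beta> * (1 + \<epsilon>\<^sub>1) * (\<alpha> ^ l * (1 + \<epsilon>\<^sub>2) ^ k)"
    using assms by (intro mult_mono) auto
  then show "\<beta>' * \<alpha>' ^ l \<le> (1 + \<epsilon>\<^sub>1) * (1 + \<epsilon>\<^sub>2) ^ k * (\<beta> * \<alpha> ^ l)"
    by (simp add: ac_simps)
qed

theorem lemma10:
  fixes n k :: nat and S :: "nat \<Rightarrow> real" and \<gamma> \<alpha> \<beta> \<alpha>' \<beta>' \<epsilon>\<^sub>1 \<epsilon>\<^sub>2 :: real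
    and L :: "nat \<Rightarrow> nat"
  assumes "\<forall>i\<in>{1..n}. S i > 0"
    and "\<gamma> > 0" and "k \<ge> 1"
    and "exp_optimal n S \<gamma> k L \<alpha> \<beta>"
    and "\<epsilon>\<^sub>1 > 0" and "\<epsilon>\<^sub>2 > 0"
    and "\<beta> \<le> \<beta>'" and "\<beta>' \<le> \<beta> * (1 + \<epsilon>\<^sub>1)"
    and "\<alpha> \<le> \<alpha>'" and "\<alpha>' \<le> \<alpha> * (1 + \<epsilon>\<^sub>2)"
  shows "let g = (\<Prod>i=1..n. S i) powr (1 / real n);
             \<psi> = real n * ln g;
             c = (1 + \<epsilon>\<^sub>1) * (1 + \<epsilon>\<^sub>2) ^ k
         in score_exp n L S \<alpha>' \<beta>' \<gamma> - \<psi> \<le> c * (score_exp n L S \<alpha> \<beta> \<gamma> - \<psi>)"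
proof -
  note S = assms(1)
  have \<alpha>\<beta>: "\<alpha> > 1" "\<beta> > 0" and L: "\<And>i. i \<in> {1..n} \<Longrightarrow> lev L i \<le> k"
    using assms(4) by (auto simp: exp_optimal_def level_seq_def lev_def)
  define c where "c = (1 + \<epsilon>\<^sub>1) * (1 + \<epsilon>\<^sub>2) ^ k"
  define x where "x b a i = b * a ^ lev L i * S i" for b a :: real and i
  define P where "P = (\<Sum>i=1..n. pen n \<gamma> (lev L (i - 1)) (lev L i))"
  have "c \<ge> 1"
    using assms(5,6) one_le_power[of "1 + \<epsilon>\<^sub>2" k] mult_mono[of 1 "1 + \<epsilon>\<^sub>1" 1 "(1 + \<epsilon>\<^sub>2) ^ k"]
    by (simp add: c_def)
  moreover have "P \<ge> 0"
    using assms(2) by (simp add: P_def pen_nonneg sum_nonneg)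
  moreover have "(\<Sum>i=1..n. ln (x \<beta> \<alpha> i)) \<le> 0"
    using exp_optimal_sum_le[OF S assms(4)] S \<alpha>\<beta>
    by (intro sum_ln_le_zero) (auto simp: x_def)
  moreover have "0 < x \<beta> \<alpha> i \<and> x \<beta> \<alpha> i \<le> x \<beta>' \<alpha>' i \<and> x \<beta>' \<alpha>' i \<le> c * x \<beta> \<alpha> i"
    if "i \<in> {1..n}" for i
    using rate_perturbation_bounds[OF _ _ _ L[OF that] assms(7-10)] \<alpha>\<beta> assms(6) S that
    by (auto simp: x_def c_def mult.assoc intro: mult_right_mono)
  ultimately have "(\<Sum>i=1..n. x \<beta>' \<alpha>' i - ln (x \<beta>' \<alpha>' i)) + P
      \<le> c * ((\<Sum>i=1..n. x \<beta> \<alpha> i - ln (x \<beta> \<alpha> i)) + P)"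
    by (intro sum_sub_ln_scaled_le)
  with S \<alpha>\<beta> assms(7,9) show ?thesis
    unfolding Let_def n_ln_geometric_mean[OF S] by (simp add: score_exp_eq x_def P_def c_def)
qed

end
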